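(* $\mathcal{B}_f(H)$ is not Polishable in either the norm topology or the strong operator topology; that is, there is no Polish group topology on the additive group $\mathcal{B}_f(H)$ whose Borel sets coincide with the Borel sets induced on $\mathcal{B}_f(H)$ by the operator norm topology, nor one whose Borel sets coincide with those induced by the strong operator topology.
   Context: $H$ is a fixed infinite-dimensional separable complex Hilbert space, $\mathcal{B}(H)$ its bounded operators, and $\mathcal{B}_f(H)$ the finite-rank operators. The strong operator topology is the topology of pointwise norm convergence on $H$. *)

theory Defs
  imports "HOL-Analysis.Analysis"
begin

text \<open>A complex Hilbert space is modelled as a real Hilbert space (type of class
  real_inner and banach) together with a complex structure J (multiplication by i):
  a real-linear isometry with J (J x) = - x. Complex scalar multiplication is
  (a + b i) x = a x + b J x and the complex inner product is
  inner x y + i inner x (J y); every complex Hilbert space arises this way.\<close>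

definition complex_structure :: "('h::real_inner \<Rightarrow> 'h) \<Rightarrow> bool" where
  "complex_structure J \<longleftrightarrow> linear J \<and> (\<forall>x. J (J x) = - x) \<and> (\<forall>x. norm (J x) = norm x)"

definition infinite_dimensional :: "'h::real_vector itself \<Rightarrow> bool" where
  "infinite_dimensional _ \<longleftrightarrow> \<not> (\<exists>S::'h set. finite S \<and> span S = UNIV)"

definition separable_type :: "'h::topological_space itself \<Rightarrow> bool" where
  "separable_type _ \<longleftrightarrow> (\<exists>D::'h set. countable D \<and> closure D = UNIV)"

text \<open>Bounded complex-linear operators: bounded real-linear maps commuting with J.\<close>
definition bounded_ops :: "('h::real_normed_vector \<Rightarrow> 'h) \<Rightarrow> ('h \<Rightarrow>\<^sub>L 'h) set" where
  "bounded_ops J = {T. \<forall>x. blinfun_apply T (J x) = J (blinfun_apply T x)}"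

definition finite_rank_ops :: "('h::real_normed_vector \<Rightarrow> 'h) \<Rightarrow> ('h \<Rightarrow>\<^sub>L 'h) set" where
  "finite_rank_ops J = {T \<in> bounded_ops J. \<exists>S. finite S \<and> range (blinfun_apply T) \<subseteq> span S}"

definition borel_sets_of :: "'a topology \<Rightarrow> 'a set set" where
  "borel_sets_of X = sigma_sets (topspace X) (Collect (openin X))"

definition Polish_topology :: "'a topology \<Rightarrow> bool" where
  "Polish_topology X \<longleftrightarrow> completely_metrizable_space X \<and> separable_space X"

definition Polish_group_topology :: "'a::ab_group_add set \<Rightarrow> 'a topology \<Rightarrow> bool" where
  "Polish_group_topology G X \<longleftrightarrow> topspace X = G \<and> Polish_topology X
     \<and> continuous_map (prod_topology X X) X (\<lambda>(x, y). x + y)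
     \<and> continuous_map X X uminus"

definition Polishable :: "'a::ab_group_add set \<Rightarrow> 'a topology \<Rightarrow> bool" where
  "Polishable G Y \<longleftrightarrow> (\<exists>X. Polish_group_topology G X \<and> borel_sets_of X = borel_sets_of Y)"

end

theory Submission
  imports Defs
begin

text \<open>
  Let \<open>F n\<close> be the set of operators of rank at most \<open>n\<close>. Each \<open>F n\<close> is closed in the
  strong operator topology, hence in the norm topology, so it is Borel for any Polish group
  topology with the same Borel sets; moreover \<open>F a - F b \<subseteq> F (a + b)\<close>. By the Baire category
  theorem some \<open>F n\<close> is non-meagre, so by Pettis' argument \<open>F (2n) \<supseteq> F n - F n\<close> contains a
  neighbourhood \<open>W\<close> of \<open>0\<close>. By separability countably many translates of \<open>W\<close> cover the group,
  so any uncountable family has two members whose difference lies in \<open>W - W \<subseteq> F (4n)\<close>. This fails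
  for the multiples \<open>\<alpha> P\<close> of a complex-linear orthogonal projection \<open>P\<close> of rank \<open>> 4n\<close>.
\<close>

section \<open>Meagre sets and the Baire property\<close>

definition meagre :: "'a topology \<Rightarrow> 'a set \<Rightarrow> bool" where
  "meagre X A \<longleftrightarrow>
     (\<exists>M. countable M \<and> (\<forall>C\<in>M. closedin X C \<and> X interior_of C = {}) \<and> A \<subseteq> \<Union>M)"

lemma meagre_empty: "meagre X {}"
  unfolding meagre_def by (rule exI[of _ "{}"]) simp

lemma meagre_subset: "meagre X A \<Longrightarrow> B \<subseteq> A \<Longrightarrow> meagre X B"
  unfolding meagre_def by (meson order_trans)

lemma meagre_Un:
  assumes "meagre X A" "meagre X B"
  shows "meagre X (A \<union> B)"
proof -
  obtain M N where "countable M" "\<forall>C\<in>M. closedin X C \<and> X interior_of C = {}" "A \<subseteq> \<Union>M"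
    "countable N" "\<forall>C\<in>N. closedin X C \<and> X interior_of C = {}" "B \<subseteq> \<Union>N"
    using assms unfolding meagre_def by blast
  then show ?thesis
    unfolding meagre_def by (intro exI[of _ "M \<union> N"]) auto
qed

lemma meagre_UN:
  assumes "\<And>n::nat. meagre X (A n)"
  shows "meagre X (\<Union>n. A n)"
proof -
  obtain M where M: "\<And>n. countable (M n)" "\<And>n. \<forall>C\<in>M n. closedin X C \<and> X interior_of C = {}"
    "\<And>n. A n \<subseteq> \<Union>(M n)"
    using assms unfolding meagre_def by metis
  show ?thesis
    unfolding meagre_def
  proof (intro exI conjI)
    show "countable (\<Union>n. M n)"
      using M(1) by simp
    show "\<forall>C\<in>\<Union>n. M n. closedin X C \<and> X interior_of C = {}"
      using M(2) by blast
    show "(\<Union>n. A n) \<subseteq> \<Union>(\<Union>n. M n)"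
      using M(3) by blast
  qed
qed

lemma meagre_openin_empty:
  assumes "completely_metrizable_space X" "openin X U" "meagre X U"
  shows "U = {}"
proof -
  obtain M where M: "countable M" "\<And>C. C \<in> M \<Longrightarrow> closedin X C \<and> X interior_of C = {}" "U \<subseteq> \<Union>M"
    using assms(3) unfolding meagre_def by blast
  have "U \<subseteq> X interior_of \<Union>M"
    using interior_of_maximal[OF M(3) assms(2)] .
  also have "\<dots> = {}"
    using Baire_category_alt[of X M] assms(1) M(1,2) by blast
  finally show ?thesis by blast
qed

lemma meagre_frontier_of_openin:
  assumes "openin X U"
  shows "meagre X (X frontier_of U)"
proof -
  have "X interior_of (X frontier_of U) \<inter> X closure_of U = {}"
  proof -
    have "X interior_of (X frontier_of U) \<inter> U = {}"
      using interior_of_subset[of X "X frontier_of U"] frontier_of_openin[OF assms] by blast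
    then show ?thesis
      using openin_Int_closure_of_eq_empty[of X "X interior_of (X frontier_of U)"] by simp
  qed
  then have "X interior_of (X frontier_of U) = {}"
    using interior_of_subset[of X "X frontier_of U"] frontier_of_openin[OF assms] by blast
  then show ?thesis
    unfolding meagre_def by (intro exI[of _ "{X frontier_of U}"]) (auto simp: closedin_frontier_of)
qed

lemma meagre_homeomorphic_image:
  assumes hom: "homeomorphic_map X Y f" and "meagre X A"
  shows "meagre Y (f ` A)"
proof -
  obtain M where M: "countable M" "\<And>C. C \<in> M \<Longrightarrow> closedin X C \<and> X interior_of C = {}" "A \<subseteq> \<Union>M"
    using assms(2) unfolding meagre_def by blast
  have "closedin Y (f ` C) \<and> Y interior_of (f ` C) = {}" if "C \<in> M" for C
  proof -
    have "C \<subseteq> topspace X"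
      using M(2)[OF that] closedin_subset by blast
    then show ?thesis
      using M(2)[OF that] homeomorphic_map_closedness[OF hom] homeomorphic_map_interior_of[OF hom]
      by simp
  qed
  moreover have "f ` A \<subseteq> \<Union>((\<lambda>C. f ` C) ` M)"
    using M(3) by blast
  ultimately show ?thesis
    unfolding meagre_def using M(1) by (intro exI[of _ "(\<lambda>C. f ` C) ` M"]) simp
qed

definition Baire_property :: "'a topology \<Rightarrow> 'a set \<Rightarrow> bool" where
  "Baire_property X A \<longleftrightarrow> (\<exists>U. openin X U \<and> meagre X (sym_diff A U))"

lemma Baire_property_borel_sets_of:
  assumes "A \<in> borel_sets_of X"
  shows "Baire_property X A"
  using assms unfolding borel_sets_of_def
proof (induction rule: sigma_sets.induct)
  case (Basic a)
  then show ?case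
    unfolding Baire_property_def by (intro exI[of _ a]) (auto simp: meagre_empty)
next
  case Empty
  then show ?case
    unfolding Baire_property_def by (intro exI[of _ "{}"]) (auto simp: meagre_empty)
next
  case (Compl a)
  then obtain U where U: "openin X U" "meagre X (sym_diff a U)"
    unfolding Baire_property_def by blast
  define V where "V = topspace X - X closure_of U"
  have "sym_diff (topspace X - a) V \<subseteq> (sym_diff a U) \<union> X frontier_of U"
    using frontier_of_openin[OF U(1)] closure_of_subset[OF openin_subset[OF U(1)]]
    unfolding V_def by blast
  moreover have "openin X V"
    unfolding V_def by (simp add: openin_diff)
  ultimately show ?case
    unfolding Baire_property_def
    using meagre_Un[OF U(2) meagre_frontier_of_openin[OF U(1)]] by (blast intro: meagre_subset)
next
  case (Union a)
  then obtain U where U: "\<And>i. openin X (U i)" "\<And>i. meagre X (sym_diff (a i) (U i))"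
    unfolding Baire_property_def by metis
  have "sym_diff (\<Union>i. a i) (\<Union>i. U i) \<subseteq> (\<Union>i. sym_diff (a i) (U i))"
    by blast
  then show ?case
    unfolding Baire_property_def using U meagre_UN[of X "\<lambda>i. sym_diff (a i) (U i)"]
    by (intro exI[of _ "\<Union>i. U i"]) (auto intro: meagre_subset)
qed

lemma closedin_in_borel_sets_of:
  assumes "closedin X C"
  shows "C \<in> borel_sets_of X"
proof -
  have "topspace X - (topspace X - C) \<in> borel_sets_of X"
    unfolding borel_sets_of_def using assms
    by (intro sigma_sets.Compl[of "topspace X - C"] sigma_sets.Basic) (simp add: openin_diff)
  then show ?thesis
    using closedin_subset[OF assms] by (simp add: double_diff)
qed

lemma countable_cover_not_meagre:
  assumes "completely_metrizable_space X" "topspace X \<noteq> {}" "topspace X \<subseteq> (\<Union>n::nat. A n)"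
  shows "\<exists>n. \<not> meagre X (A n)"
  using meagre_openin_empty[OF assms(1) openin_topspace] meagre_UN[of X A] meagre_subset assms(2,3)
  by blast

section \<open>Polish groups\<close>

lemma Polish_group_topology_add:
  assumes "Polish_group_topology G X" "x \<in> G" "y \<in> G"
  shows "x + y \<in> G"
  using assms continuous_map_image_subset_topspace[of "prod_topology X X" X "\<lambda>(x, y). x + y"]
  unfolding Polish_group_topology_def by (force simp: topspace_prod_topology)

lemma Polish_group_topology_uminus:
  assumes "Polish_group_topology G X" "x \<in> G"
  shows "- x \<in> G"
  using assms continuous_map_image_subset_topspace[of X X uminus]
  unfolding Polish_group_topology_def by blast

lemma Polish_group_topology_continuous_translation:
  assumes "Polish_group_topology G X" "c \<in> G"
  shows "continuous_map X X (\<lambda>x. x + c)"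
proof -
  have "continuous_map X (prod_topology X X) (\<lambda>x. (x, c))"
    using assms unfolding Polish_group_topology_def by (auto simp: continuous_map_pairwise o_def)
  then show ?thesis
    using continuous_map_compose[of X "prod_topology X X" "\<lambda>x. (x, c)" X "\<lambda>(x, y). x + y"] assms(1)
    unfolding Polish_group_topology_def by (simp add: o_def)
qed

lemma Polish_group_topology_homeomorphic_translation:
  assumes "Polish_group_topology G X" "c \<in> G"
  shows "homeomorphic_map X X (\<lambda>x. x + c)"
proof -
  have "continuous_map X X (\<lambda>x. x + - c)"
    using Polish_group_topology_continuous_translation Polish_group_topology_uminus assms by blast
  then have "homeomorphic_maps X X (\<lambda>x. x + c) (\<lambda>x. x + - c)"
    unfolding homeomorphic_maps_def
    using Polish_group_topology_continuous_translation[OF assms] by auto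
  then show ?thesis
    by (rule homeomorphic_maps_imp_map)
qed

lemma Polish_group_topology_continuous_reflection:
  assumes "Polish_group_topology G X" "c \<in> G"
  shows "continuous_map X X (\<lambda>x. c - x)"
  using continuous_map_compose[of X X uminus X "\<lambda>x. x + c"] assms
    Polish_group_topology_continuous_translation[OF assms]
  unfolding Polish_group_topology_def by (simp add: o_def)

lemma Polish_group_overlap_in_difference_set:
  assumes PG: "Polish_group_topology G X" and U: "openin X U" and M: "meagre X (sym_diff A U)"
    and g: "g \<in> G" "u \<in> U" "g + u \<in> U"
  shows "g \<in> {x - y |x y. x \<in> A \<and> y \<in> A}"
proof (rule ccontr)
  assume g_notin: "g \<notin> {x - y |x y. x \<in> A \<and> y \<in> A}"
  have top: "topspace X = G" and cms: "completely_metrizable_space X"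
    using PG unfolding Polish_group_topology_def Polish_topology_def by auto
  define V where "V = U \<inter> {x \<in> topspace X. x + - g \<in> U}"
  have "openin X V"
    unfolding V_def
    using openin_continuous_map_preimage[OF Polish_group_topology_continuous_translation[OF PG
          Polish_group_topology_uminus[OF PG g(1)]] U] U by (rule openin_Int[rotated])
  moreover have "g + u \<in> V"
    unfolding V_def using g openin_subset[OF U] by auto
  moreover have "V \<subseteq> sym_diff A U \<union> (\<lambda>x. x + g) ` sym_diff A U"
  proof
    fix x assume "x \<in> V"
    then have "x \<in> U" "x - g \<in> U"
      unfolding V_def by auto
    have "g = x - (x - g)" by simp
    then have "x \<notin> A \<or> x - g \<notin> A"
      using g_notin by blast
    then show "x \<in> sym_diff A U \<union> (\<lambda>x. x + g) ` sym_diff A U"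
    proof
      assume "x - g \<notin> A"
      then have "x - g \<in> sym_diff A U"
        using \<open>x - g \<in> U\<close> by blast
      then have "(x - g) + g \<in> (\<lambda>x. x + g) ` sym_diff A U"
        by (rule imageI)
      then show ?thesis by simp
    qed (use \<open>x \<in> U\<close> in blast)
  qed
  then have "meagre X V"
    by (rule meagre_subset[OF meagre_Un[OF M meagre_homeomorphic_image[OF
            Polish_group_topology_homeomorphic_translation[OF PG g(1)] M]]])
  ultimately show False
    using meagre_openin_empty[OF cms] by blast
qed

lemma Pettis_difference_set:
  assumes PG: "Polish_group_topology G X" and A: "A \<in> borel_sets_of X" "\<not> meagre X A"
  shows "\<exists>W. openin X W \<and> 0 \<in> W \<and> W \<subseteq> {x - y |x y. x \<in> A \<and> y \<in> A}"
proof -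
  have top: "topspace X = G"
    using PG unfolding Polish_group_topology_def by simp
  obtain U where U: "openin X U" and M: "meagre X (sym_diff A U)"
    using Baire_property_borel_sets_of[OF A(1)] unfolding Baire_property_def by blast
  have "U \<noteq> {}"
  proof
    assume "U = {}"
    then show False
      using A(2) M by simp
  qed
  then obtain u where u: "u \<in> U" by blast
  have uG: "u \<in> G"
    using openin_subset[OF U] top u by blast
  have "0 \<in> G"
    using Polish_group_topology_add[OF PG uG Polish_group_topology_uminus[OF PG uG]] by simp
  define W where "W = {g \<in> G. g + u \<in> U}"
  have "openin X W"
    using openin_continuous_map_preimage[OF Polish_group_topology_continuous_translation[OF PG uG] U]
    unfolding W_def top by simp
  moreover have "0 \<in> W"
    unfolding W_def using \<open>0 \<in> G\<close> u by simp
  moreover have "W \<subseteq> {x - y |x y. x \<in> A \<and> y \<in> A}"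
    unfolding W_def using Polish_group_overlap_in_difference_set[OF PG U M _ u] by blast
  ultimately show ?thesis by blast
qed

lemma separable_group_uncountable_family_difference:
  fixes f :: "'b \<Rightarrow> 'a::ab_group_add"
  assumes PG: "Polish_group_topology G X" and W: "openin X W" "0 \<in> W"
    and f: "uncountable (UNIV :: 'b set)" "range f \<subseteq> G"
  obtains \<alpha> \<beta> x y where "\<alpha> \<noteq> \<beta>" "x \<in> W" "y \<in> W" "f \<alpha> - f \<beta> = x - y"
proof -
  have top: "topspace X = G"
    using PG unfolding Polish_group_topology_def by simp
  obtain D where D: "countable D" "X closure_of D = G"
    using PG top unfolding Polish_group_topology_def Polish_topology_def separable_space_def by auto
  have "\<exists>d\<in>D. f \<alpha> - d \<in> W" for \<alpha>
  proof -
    let ?V = "{d \<in> topspace X. f \<alpha> - d \<in> W}"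
    have "openin X ?V"
      using openin_continuous_map_preimage[OF Polish_group_topology_continuous_reflection[OF PG] W(1)]
        f(2) by blast
    moreover have "f \<alpha> \<in> ?V \<inter> X closure_of D"
      using f(2) top W(2) D(2) by auto
    ultimately show ?thesis
      using openin_Int_closure_of_eq_empty[of X ?V D] by blast
  qed
  then obtain h where h: "\<And>\<alpha>. h \<alpha> \<in> D" "\<And>\<alpha>. f \<alpha> - h \<alpha> \<in> W"
    by metis
  have "\<not> inj h"
    using f(1) countable_subset[of "range h" D] D(1) h(1) countable_image_inj_on by blast
  then obtain \<alpha> \<beta> where "\<alpha> \<noteq> \<beta>" "h \<alpha> = h \<beta>"
    unfolding inj_def by blast
  moreover from this have "f \<alpha> - f \<beta> = (f \<alpha> - h \<alpha>) - (f \<beta> - h \<beta>)"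
    by simp
  ultimately show ?thesis
    using that h(2) by blast
qed

lemma not_Polishable_by_countable_cover:
  fixes F :: "nat \<Rightarrow> 'a::ab_group_add set"
  assumes borel: "\<And>n. F n \<inter> G \<in> borel_sets_of Y"
    and cover: "G \<subseteq> (\<Union>n. F n)"
    and diff: "\<And>a b x y. x \<in> F a \<Longrightarrow> y \<in> F b \<Longrightarrow> x - y \<in> F (a + b)"
    and family: "\<And>N. \<exists>f::real \<Rightarrow> 'a. range f \<subseteq> G \<and> (\<forall>\<alpha> \<beta>. \<alpha> \<noteq> \<beta> \<longrightarrow> f \<alpha> - f \<beta> \<notin> F N)"
  shows "\<not> Polishable G Y"
proof
  assume "Polishable G Y"
  then obtain X where PG: "Polish_group_topology G X" and "borel_sets_of X = borel_sets_of Y"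
    unfolding Polishable_def by blast
  then have borelX: "F n \<inter> G \<in> borel_sets_of X" for n
    using borel by simp
  have top: "topspace X = G" and cms: "completely_metrizable_space X"
    using PG unfolding Polish_group_topology_def Polish_topology_def by auto
  have "G \<noteq> {}"
    using family[of 0] by blast
  then obtain n where "\<not> meagre X (F n \<inter> G)"
    using countable_cover_not_meagre[OF cms, of "\<lambda>n. F n \<inter> G"] cover top by blast
  then obtain W where W: "openin X W" "0 \<in> W"
    and W_diff: "W \<subseteq> {x - y |x y. x \<in> F n \<inter> G \<and> y \<in> F n \<inter> G}"
    using Pettis_difference_set[OF PG borelX] by blast
  have WF: "w \<in> F (n + n)" if w: "w \<in> W" for w
  proof -
    obtain x y where "w = x - y" "x \<in> F n" "y \<in> F n"
      using W_diff w by blast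
    then show ?thesis
      using diff by simp
  qed
  obtain f :: "real \<Rightarrow> 'a" where fG: "range f \<subseteq> G"
    and f: "\<forall>\<alpha> \<beta>. \<alpha> \<noteq> \<beta> \<longrightarrow> f \<alpha> - f \<beta> \<notin> F ((n + n) + (n + n))"
    using family[of "(n + n) + (n + n)"] by blast
  obtain \<alpha> \<beta> x y where "\<alpha> \<noteq> \<beta>" "x \<in> W" "y \<in> W" "f \<alpha> - f \<beta> = x - y"
    by (rule separable_group_uncountable_family_difference[OF PG W uncountable_UNIV_real fG])
  then have "f \<alpha> - f \<beta> \<in> F ((n + n) + (n + n))"
    using diff[OF WF WF] by simp
  then show False
    using f \<open>\<alpha> \<noteq> \<beta>\<close> by blast
qed

section \<open>Orthonormal families\<close>

definition orthonormal_set :: "'a::real_inner set \<Rightarrow> bool" where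
  "orthonormal_set E \<longleftrightarrow> (\<forall>e\<in>E. inner e e = 1) \<and> (\<forall>e\<in>E. \<forall>e'\<in>E. e \<noteq> e' \<longrightarrow> inner e e' = 0)"

lemma orthonormal_set_independent:
  assumes "orthonormal_set E"
  shows "independent E"
proof (rule pairwise_orthogonal_independent)
  show "pairwise orthogonal E"
    using assms unfolding orthonormal_set_def pairwise_def orthogonal_def by blast
  show "0 \<notin> E"
    using assms unfolding orthonormal_set_def by fastforce
qed

lemma orthonormal_set_insert_normalized:
  assumes "orthonormal_set E" "w \<noteq> 0" "\<forall>e\<in>E. inner w e = 0"
  shows "orthonormal_set (insert (w /\<^sub>R norm w) E) \<and> w /\<^sub>R norm w \<notin> E"
proof -
  have "inner (w /\<^sub>R norm w) (w /\<^sub>R norm w) = 1"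
    using assms(2) by (simp add: power2_norm_eq_inner[symmetric] power2_eq_square)
  then show ?thesis
    using assms unfolding orthonormal_set_def by (auto simp: inner_commute)
qed

lemma exists_orthogonal_component:
  fixes E :: "'a::real_inner set"
  assumes "finite E" "orthonormal_set E" "v \<notin> span E"
  shows "\<exists>w. w \<noteq> 0 \<and> (\<forall>e\<in>E. inner w e = 0) \<and> v - w \<in> span E"
proof -
  define s where "s = (\<Sum>e\<in>E. inner v e *\<^sub>R e)"
  have s: "s \<in> span E"
    unfolding s_def by (intro span_sum span_scale span_base)
  have "inner s e' = inner v e'" if "e' \<in> E" for e'
  proof -
    have "inner s e' = (\<Sum>e\<in>E. if e = e' then inner v e' else 0)"
      unfolding s_def inner_sum_left using assms(2) that
      unfolding orthonormal_set_def by (intro sum.cong) auto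
    then show ?thesis
      using assms(1) that by simp
  qed
  then show ?thesis
    using s assms(3) by (intro exI[of _ "v - s"]) (auto simp: inner_diff_left)
qed

lemma orthonormal_set_in_subspace_exists:
  fixes V :: "'a::real_inner set"
  assumes V: "subspace V" and large: "\<And>S. finite S \<Longrightarrow> card S \<le> n \<Longrightarrow> \<not> V \<subseteq> span S"
  shows "\<exists>E. finite E \<and> card E = Suc n \<and> E \<subseteq> V \<and> orthonormal_set E"
proof -
  have "\<exists>E. finite E \<and> card E = k \<and> E \<subseteq> V \<and> orthonormal_set E" if "k \<le> Suc n" for k
    using that
  proof (induction k)
    case 0
    show ?case by (intro exI[of _ "{}"]) (simp add: orthonormal_set_def)
  next
    case (Suc k)
    then obtain E where E: "finite E" "card E = k" "E \<subseteq> V" "orthonormal_set E"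
      by auto
    obtain v where v: "v \<in> V" "v \<notin> span E"
      using large[OF E(1)] E(2) Suc.prems by auto
    obtain w where w: "w \<noteq> 0" "\<forall>e\<in>E. inner w e = 0" "v - w \<in> span E"
      using exists_orthogonal_component[OF E(1,4) v(2)] by blast
    have "w \<in> V"
      using subspace_diff[OF V v(1), of "v - w"] w(3) span_minimal[OF E(3) V] by auto
    then show ?case
      using orthonormal_set_insert_normalized[OF E(4) w(1,2)] E(1-3) subspace_scale[OF V]
      by (intro exI[of _ "insert (w /\<^sub>R norm w) E"]) auto
  qed
  then show ?thesis by blast
qed

lemma near_orthonormal_relation_trivial:
  fixes v w :: "'i \<Rightarrow> 'a::real_inner"
  assumes I: "finite I"
    and orth: "\<And>i j. i \<in> I \<Longrightarrow> j \<in> I \<Longrightarrow> inner (v i) (v j) = (if i = j then 1 else 0)"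
    and close: "\<And>i. i \<in> I \<Longrightarrow> norm (w i - v i) < 1 / (real (card I) + 1)"
    and rel: "(\<Sum>i\<in>I. c i *\<^sub>R w i) = 0"
  shows "\<forall>i\<in>I. c i = 0"
proof (rule ccontr)
  \<comment> \<open>Pair the relation with \<open>v j\<close> for the largest \<open>\<bar>c j\<bar>\<close>:
    then \<open>\<bar>c j\<bar> \<le> card I * \<bar>c j\<bar> / (card I + 1)\<close>.\<close>
  assume "\<not> (\<forall>i\<in>I. c i = 0)"
  then have "I \<noteq> {}" by blast
  then obtain j where j: "j \<in> I" "Max ((\<lambda>i. \<bar>c i\<bar>) ` I) = \<bar>c j\<bar>"
    using obtains_MAX[OF I] by blast
  have cj: "\<bar>c i\<bar> \<le> \<bar>c j\<bar>" if "i \<in> I" for i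
    using Max_ge[of "(\<lambda>i. \<bar>c i\<bar>) ` I"] I that j(2) by auto
  have "\<bar>c j\<bar> > 0"
    using cj \<open>\<not> (\<forall>i\<in>I. c i = 0)\<close> by force
  define r where "r = 1 / (real (card I) + 1)"
  define R where "R = (\<Sum>i\<in>I. c i * inner (w i - v i) (v j))"
  have "0 = inner (\<Sum>i\<in>I. c i *\<^sub>R w i) (v j)"
    using rel by simp
  also have "\<dots> = (\<Sum>i\<in>I. c i * inner (v i) (v j)) + R"
    unfolding R_def by (simp add: inner_sum_left inner_diff_left sum.distrib[symmetric] algebra_simps)
  also have "(\<Sum>i\<in>I. c i * inner (v i) (v j)) = (\<Sum>i\<in>I. if i = j then c j else 0)"
    using orth j(1) by (intro sum.cong) auto
  also have "\<dots> = c j"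
    using j(1) I by simp
  finally have cR: "\<bar>c j\<bar> = \<bar>R\<bar>" by linarith
  have "norm (v j) = 1"
    using orth[OF j(1) j(1)] by (simp add: norm_eq_sqrt_inner)
  have term_bound: "\<bar>c i * inner (w i - v i) (v j)\<bar> \<le> \<bar>c j\<bar> * r" if "i \<in> I" for i
  proof -
    have "\<bar>inner (w i - v i) (v j)\<bar> \<le> norm (w i - v i)"
      using Cauchy_Schwarz_ineq2[of "w i - v i" "v j"] \<open>norm (v j) = 1\<close> by simp
    also have "\<dots> \<le> r"
      using less_imp_le[OF close[OF that]] unfolding r_def .
    finally have "\<bar>inner (w i - v i) (v j)\<bar> \<le> r" .
    then show ?thesis
      unfolding abs_mult using cj[OF that] by (intro mult_mono) auto
  qed
  have "\<bar>R\<bar> \<le> (\<Sum>i\<in>I. \<bar>c i * inner (w i - v i) (v j)\<bar>)"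
    unfolding R_def by (rule sum_abs)
  also have "\<dots> \<le> (\<Sum>i\<in>I. \<bar>c j\<bar> * r)"
    using term_bound by (rule sum_mono)
  also have "\<dots> = real (card I) * (\<bar>c j\<bar> * r)"
    by simp
  also have "\<dots> < \<bar>c j\<bar>"
    using \<open>\<bar>c j\<bar> > 0\<close> unfolding r_def by (simp add: field_simps)
  finally show False
    using cR by simp
qed

lemma near_orthonormal_family_independent:
  fixes v w :: "'i \<Rightarrow> 'a::real_inner"
  assumes I: "finite I"
    and orth: "\<And>i j. i \<in> I \<Longrightarrow> j \<in> I \<Longrightarrow> inner (v i) (v j) = (if i = j then 1 else 0)"
    and close: "\<And>i. i \<in> I \<Longrightarrow> norm (w i - v i) < 1 / (real (card I) + 1)"
  shows "inj_on w I" "independent (w ` I)"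
proof -
  have trivial: "\<forall>i\<in>I. c i = 0" if rel: "(\<Sum>i\<in>I. c i *\<^sub>R w i) = 0" for c
    using near_orthonormal_relation_trivial[of I v w c] I orth close rel by blast
  show inj: "inj_on w I"
  proof (rule inj_onI, rule ccontr)
    fix i j assume ij: "i \<in> I" "j \<in> I" "w i = w j" "i \<noteq> j"
    define c where "c k = (if k = i then 1 else if k = j then -1 else (0::real))" for k
    have "(\<Sum>k\<in>I. c k *\<^sub>R w k) = (\<Sum>k\<in>I. (if k = i then w k else 0) - (if k = j then w k else 0))"
      unfolding c_def using ij(4) by (intro sum.cong) auto
    also have "\<dots> = 0"
      using ij(1-3) I by (simp add: sum_subtractf)
    finally have "\<forall>k\<in>I. c k = 0"
      by (rule trivial)
    then show False
      using ij(1) unfolding c_def by auto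
  qed
  show "independent (w ` I)"
  proof (rule real_vector.independent_if_scalars_zero)
    show "finite (w ` I)"
      using I by simp
  next
    fix g x assume rel: "(\<Sum>y\<in>w ` I. g y *\<^sub>R y) = 0" and x: "x \<in> w ` I"
    have "(\<Sum>i\<in>I. g (w i) *\<^sub>R w i) = 0"
      using rel by (simp add: sum.reindex[OF inj])
    then show "g x = 0"
      using trivial[of "\<lambda>i. g (w i)"] x by blast
  qed
qed

section \<open>Operators of bounded rank\<close>

definition rank_at_most :: "nat \<Rightarrow> ('a::real_normed_vector \<Rightarrow>\<^sub>L 'b::real_normed_vector) set" where
  "rank_at_most n = {T. \<exists>S. finite S \<and> card S \<le> n \<and> range (blinfun_apply T) \<subseteq> span S}"

lemma rank_at_most_diff:
  assumes "T \<in> rank_at_most a" "U \<in> rank_at_most b"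
  shows "T - U \<in> rank_at_most (a + b)"
proof -
  obtain S1 where S1: "finite S1" "card S1 \<le> a" "range (blinfun_apply T) \<subseteq> span S1"
    using assms(1) unfolding rank_at_most_def by blast
  obtain S2 where S2: "finite S2" "card S2 \<le> b" "range (blinfun_apply U) \<subseteq> span S2"
    using assms(2) unfolding rank_at_most_def by blast
  have "blinfun_apply T x \<in> span (S1 \<union> S2)" "blinfun_apply U x \<in> span (S1 \<union> S2)" for x
    using S1(3) S2(3) span_mono[of S1 "S1 \<union> S2"] span_mono[of S2 "S1 \<union> S2"] by blast+
  then have "range (blinfun_apply (T - U)) \<subseteq> span (S1 \<union> S2)"
    by (auto simp: blinfun.diff_left intro: span_diff)
  moreover have "card (S1 \<union> S2) \<le> a + b"
    using card_Un_le[of S1 S2] S1(2) S2(2) by linarith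
  ultimately show ?thesis
    unfolding rank_at_most_def using S1(1) S2(1) by blast
qed

lemma rank_at_most_scaleR_cancel:
  assumes "c \<noteq> 0" "c *\<^sub>R T \<in> rank_at_most n"
  shows "T \<in> rank_at_most n"
proof -
  obtain S where S: "finite S" "card S \<le> n" "range (blinfun_apply (c *\<^sub>R T)) \<subseteq> span S"
    using assms(2) unfolding rank_at_most_def by blast
  have "blinfun_apply T x = inverse c *\<^sub>R blinfun_apply (c *\<^sub>R T) x" for x
    using assms(1) by (simp add: blinfun.scaleR_left)
  then have "range (blinfun_apply T) \<subseteq> span S"
    using S(3) by (auto intro: span_scale)
  then show ?thesis
    unfolding rank_at_most_def using S(1,2) by blast
qed

lemma finite_rank_ops_subset_rank_at_most: "finite_rank_ops J \<subseteq> (\<Union>n. rank_at_most n)"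
  unfolding finite_rank_ops_def rank_at_most_def by blast

lemma not_rank_at_most_if_near_orthonormal:
  fixes T :: "'a::real_normed_vector \<Rightarrow>\<^sub>L 'b::real_inner"
  assumes E: "finite E" "card E = Suc n" "orthonormal_set E"
    and near: "\<And>e. e \<in> E \<Longrightarrow> norm (blinfun_apply T (x e) - e) < 1 / (real (card E) + 1)"
  shows "T \<notin> rank_at_most n"
proof
  assume "T \<in> rank_at_most n"
  then obtain S where S: "finite S" "card S \<le> n" "range (blinfun_apply T) \<subseteq> span S"
    unfolding rank_at_most_def by blast
  let ?w = "\<lambda>e. blinfun_apply T (x e)"
  have "inner e e' = (if e = e' then 1 else 0)" if "e \<in> E" "e' \<in> E" for e e'
    using E(3) that unfolding orthonormal_set_def by auto
  then have inj: "inj_on ?w E" and ind: "independent (?w ` E)"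
    using near_orthonormal_family_independent[OF E(1), of "\<lambda>e. e" ?w] near by auto
  have "?w ` E \<subseteq> span S"
    using S(3) by auto
  then have "card (?w ` E) \<le> card S"
    using independent_span_bound[OF S(1) ind] by simp
  then show False
    using card_image[OF inj] E(2) S(2) by simp
qed

lemma rank_at_most_complement_nbhd:
  fixes T :: "'a::real_normed_vector \<Rightarrow>\<^sub>L 'b::real_inner"
  assumes T: "T \<notin> rank_at_most n"
  shows "\<exists>N. openin strong_operator_topology N \<and> T \<in> N \<and> N \<subseteq> UNIV - rank_at_most n"
proof -
  have V: "subspace (range (blinfun_apply T))"
    by (intro linear_subspace_image subspace_UNIV bounded_linear.linear blinfun.bounded_linear_right)
  have large: "\<not> range (blinfun_apply T) \<subseteq> span S" if "finite S" "card S \<le> n" for S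
    using T that unfolding rank_at_most_def by auto
  obtain E where E: "finite E" "card E = Suc n" "E \<subseteq> range (blinfun_apply T)" "orthonormal_set E"
    using orthonormal_set_in_subspace_exists[OF V large] by blast
  then have "\<forall>e\<in>E. \<exists>y. blinfun_apply T y = e"
    by auto
  then obtain x where x: "\<And>e. e \<in> E \<Longrightarrow> blinfun_apply T (x e) = e"
    by metis
  define N where "N = {T'. \<forall>e\<in>E. blinfun_apply T' (x e) \<in> ball e (1 / (real (card E) + 1))}"
  have "openin strong_operator_topology N"
    unfolding N_def using E(1) by (intro strong_operator_topology_basis) auto
  moreover have "T \<in> N"
    unfolding N_def using x by simp
  moreover have "N \<subseteq> UNIV - rank_at_most n"
  proof
    fix T' assume "T' \<in> N"
    then have "T' \<notin> rank_at_most n"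
      using not_rank_at_most_if_near_orthonormal[OF E(1,2,4), of T' x]
      unfolding N_def by (simp add: dist_norm norm_minus_commute)
    then show "T' \<in> UNIV - rank_at_most n"
      by simp
  qed
  ultimately show ?thesis
    by blast
qed

lemma closedin_strong_operator_topology_rank_at_most:
  "closedin strong_operator_topology (rank_at_most n :: ('a::real_normed_vector \<Rightarrow>\<^sub>L 'b::real_inner) set)"
proof -
  have "openin strong_operator_topology (UNIV - rank_at_most n :: ('a \<Rightarrow>\<^sub>L 'b) set)"
    unfolding openin_subopen[of _ "UNIV - rank_at_most n"] by (intro ballI rank_at_most_complement_nbhd) simp
  then show ?thesis
    unfolding closedin_def by (simp add: strong_operator_topology_topspace)
qed

lemma closedin_euclidean_rank_at_most:
  "closedin euclidean (rank_at_most n :: ('a::real_normed_vector \<Rightarrow>\<^sub>L 'b::real_inner) set)"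
  using closedin_continuous_map_preimage[OF strong_operator_topology_weaker_than_euclidean
      closedin_strong_operator_topology_rank_at_most]
  by simp

section \<open>Complex structures\<close>

context
  fixes J :: "'h::real_inner \<Rightarrow> 'h"
  assumes J: "complex_structure J"
begin

lemma complex_structure_linear: "linear J"
  using J unfolding complex_structure_def by blast

lemma complex_structure_inner: "inner (J x) (J y) = inner x y"
proof -
  have norm_sq: "inner (J z) (J z) = inner z z" for z
    using J unfolding complex_structure_def by (metis power2_norm_eq_inner)
  have "inner (J x + J y) (J x + J y) = inner (x + y) (x + y)"
    using norm_sq[of "x + y"] linear_add[OF complex_structure_linear] by simp
  then show ?thesis
    using norm_sq[of x] norm_sq[of y] by (simp add: inner_add_left inner_add_right inner_commute)
qed

lemma complex_structure_inner_skew: "inner (J x) y = - inner x (J y)"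
proof -
  have "inner (J x) y = inner (J (J x)) (J y)"
    by (rule complex_structure_inner[symmetric])
  then show ?thesis
    using J unfolding complex_structure_def by simp
qed

lemma complex_structure_inner_self: "inner x (J x) = 0"
  using complex_structure_inner_skew[of x x] by (simp add: inner_commute)

lemma orthonormal_set_Un_complex_image:
  assumes B: "orthonormal_set B" and BJ: "\<forall>b\<in>B. \<forall>b'\<in>B. inner b (J b') = 0"
  shows "orthonormal_set (B \<union> J ` B)"
  unfolding orthonormal_set_def
proof (intro conjI ballI impI)
  fix e assume "e \<in> B \<union> J ` B"
  then show "inner e e = 1"
    using B unfolding orthonormal_set_def by (auto simp: complex_structure_inner)
next
  fix e e' assume "e \<in> B \<union> J ` B" "e' \<in> B \<union> J ` B" "e \<noteq> e'"
  then consider "e \<in> B" "e' \<in> B" | b' where "e \<in> B" "b' \<in> B" "e' = J b'"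
    | b where "b \<in> B" "e = J b" "e' \<in> B" | b b' where "b \<in> B" "b' \<in> B" "b \<noteq> b'" "e = J b" "e' = J b'"
    by blast
  then show "inner e e' = 0"
  proof cases
    case 1
    then show ?thesis
      using B \<open>e \<noteq> e'\<close> unfolding orthonormal_set_def by blast
  next
    case 2
    then show ?thesis
      using BJ by blast
  next
    case 3
    then show ?thesis
      using BJ complex_structure_inner_skew by simp
  next
    case 4
    then show ?thesis
      using B complex_structure_inner unfolding orthonormal_set_def by simp
  qed
qed

lemma complex_orthonormal_set_exists:
  assumes inf: "infinite_dimensional TYPE('h)"
  shows "\<exists>B. finite B \<and> card B = k \<and> orthonormal_set B \<and> (\<forall>b\<in>B. \<forall>b'\<in>B. inner b (J b') = 0)"
proof (induction k)
  case 0
  show ?case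
    by (intro exI[of _ "{}"]) (simp add: orthonormal_set_def)
next
  case (Suc k)
  then obtain B where B: "finite B" "card B = k" "orthonormal_set B"
    and BJ: "\<forall>b\<in>B. \<forall>b'\<in>B. inner b (J b') = 0"
    by blast
  define E where "E = B \<union> J ` B"
  have E: "finite E" "orthonormal_set E"
    unfolding E_def using B(1) orthonormal_set_Un_complex_image[OF B(3) BJ] by auto
  obtain v where "v \<notin> span E"
    using inf E(1) unfolding infinite_dimensional_def by blast
  then obtain w where w: "w \<noteq> 0" "\<forall>x\<in>E. inner w x = 0"
    using exists_orthogonal_component[OF E] by blast
  define e where "e = w /\<^sub>R norm w"
  have e_B: "orthonormal_set (insert e B)" "e \<notin> B"
    unfolding e_def using orthonormal_set_insert_normalized[OF B(3) w(1)] w(2) unfolding E_def by auto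
  have e_E: "inner e x = 0" if "x \<in> E" for x
    unfolding e_def using w(2) that by simp
  have "inner b (J b') = 0" if "b \<in> insert e B" "b' \<in> insert e B" for b b'
  proof -
    have "inner e (J b) = 0" "inner b (J e) = 0" if "b \<in> B" for b
      using e_E[of "J b"] that complex_structure_inner_skew[of b e]
      unfolding E_def by (auto simp: inner_commute)
    then show ?thesis
      using that BJ complex_structure_inner_self by auto
  qed
  then show ?case
    using B(1,2) e_B by (intro exI[of _ "insert e B"]) auto
qed

lemma finite_rank_ops_scaleR:
  assumes "T \<in> finite_rank_ops J"
  shows "c *\<^sub>R T \<in> finite_rank_ops J"
proof -
  obtain S where "finite S" "range (blinfun_apply T) \<subseteq> span S"
    using assms unfolding finite_rank_ops_def by blast
  then have "finite S \<and> range (blinfun_apply (c *\<^sub>R T)) \<subseteq> span S"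
    by (auto simp: blinfun.scaleR_left intro: span_scale)
  moreover have "blinfun_apply (c *\<^sub>R T) (J x) = J (blinfun_apply (c *\<^sub>R T) x)" for x
    using assms linear_scale[OF complex_structure_linear]
    unfolding finite_rank_ops_def bounded_ops_def by (simp add: blinfun.scaleR_left)
  ultimately show ?thesis
    unfolding finite_rank_ops_def bounded_ops_def by blast
qed

lemma complex_orthonormal_projection_exists:
  assumes B: "finite B" "orthonormal_set B" and BJ: "\<forall>b\<in>B. \<forall>b'\<in>B. inner b (J b') = 0"
  shows "\<exists>P\<in>finite_rank_ops J. \<forall>b\<in>B. blinfun_apply P b = b"
proof -
  \<comment> \<open>The orthogonal projection onto the \<open>J\<close>-invariant space spanned by \<open>B \<union> J ` B\<close>.\<close>
  define p where "p x = (\<Sum>b\<in>B. inner x b *\<^sub>R b + inner x (J b) *\<^sub>R J b)" for x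
  have "bounded_linear p"
    unfolding p_def
    by (intro bounded_linear_sum bounded_linear_add bounded_linear_scaleR_const bounded_linear_inner_left)
  then have P: "blinfun_apply (Blinfun p) = p"
    by (rule bounded_linear_Blinfun_apply)
  have JJ: "J (J x) = - x" for x
    using J unfolding complex_structure_def by blast
  have "J (p x) = (\<Sum>b\<in>B. inner x b *\<^sub>R J b + inner x (J b) *\<^sub>R J (J b))" for x
    unfolding p_def using complex_structure_linear by (simp add: linear_sum linear_add linear_scale)
  also have "\<dots> x = p (J x)" for x
    unfolding p_def
    by (intro sum.cong refl) (simp add: JJ complex_structure_inner complex_structure_inner_skew)
  finally have "Blinfun p \<in> bounded_ops J"
    by (simp add: bounded_ops_def P)
  moreover have "p x \<in> span (B \<union> J ` B)" for x
    unfolding p_def by (intro span_sum span_add span_scale span_base) auto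
  then have "finite (B \<union> J ` B) \<and> range (blinfun_apply (Blinfun p)) \<subseteq> span (B \<union> J ` B)"
    using B(1) by (simp add: P image_subset_iff)
  then have "\<exists>S. finite S \<and> range (blinfun_apply (Blinfun p)) \<subseteq> span S"
    by (rule exI)
  moreover have "p b = b" if "b \<in> B" for b
  proof -
    have "p b = (\<Sum>b'\<in>B. if b' = b then b else 0)"
      unfolding p_def using B(2) BJ that unfolding orthonormal_set_def
      by (intro sum.cong refl) (auto simp: inner_commute)
    then show ?thesis
      using B(1) that by simp
  qed
  ultimately have "Blinfun p \<in> finite_rank_ops J \<and> (\<forall>b\<in>B. blinfun_apply (Blinfun p) b = b)"
    unfolding finite_rank_ops_def by (simp add: P)
  then show ?thesis
    by blast
qed

lemma finite_rank_ops_not_rank_at_most: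
  assumes "infinite_dimensional TYPE('h)"
  shows "\<exists>P\<in>finite_rank_ops J. P \<notin> rank_at_most N"
proof -
  obtain B where B: "finite B" "card B = Suc N" "orthonormal_set B"
    and BJ: "\<forall>b\<in>B. \<forall>b'\<in>B. inner b (J b') = 0"
    using complex_orthonormal_set_exists[OF assms] by blast
  obtain P where P: "P \<in> finite_rank_ops J" "\<And>b. b \<in> B \<Longrightarrow> blinfun_apply P b = b"
    using complex_orthonormal_projection_exists[OF B(1,3) BJ] by blast
  have "P \<notin> rank_at_most N"
  proof
    assume "P \<in> rank_at_most N"
    then obtain S where S: "finite S" "card S \<le> N" "range (blinfun_apply P) \<subseteq> span S"
      unfolding rank_at_most_def by blast
    have "B \<subseteq> span S"
      using S(3) P(2) by (metis rangeI subsetD subsetI)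
    then have "card B \<le> card S"
      using independent_span_bound[OF S(1) orthonormal_set_independent[OF B(3)]] by simp
    then show False
      using B(2) S(2) by simp
  qed
  then show ?thesis
    using P(1) by blast
qed

lemma finite_rank_ops_uncountable_family:
  assumes "infinite_dimensional TYPE('h)"
  shows "\<exists>f::real \<Rightarrow> ('h \<Rightarrow>\<^sub>L 'h). range f \<subseteq> finite_rank_ops J
    \<and> (\<forall>\<alpha> \<beta>. \<alpha> \<noteq> \<beta> \<longrightarrow> f \<alpha> - f \<beta> \<notin> rank_at_most N)"
proof -
  obtain P where P: "P \<in> finite_rank_ops J" "P \<notin> rank_at_most N"
    using finite_rank_ops_not_rank_at_most[OF assms] by blast
  show ?thesis
  proof (intro exI[of _ "\<lambda>\<alpha>. \<alpha> *\<^sub>R P"] conjI allI impI)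
    show "range (\<lambda>\<alpha>::real. \<alpha> *\<^sub>R P) \<subseteq> finite_rank_ops J"
      using finite_rank_ops_scaleR[OF P(1)] by auto
  next
    fix \<alpha> \<beta> :: real assume "\<alpha> \<noteq> \<beta>"
    then have "\<alpha> - \<beta> \<noteq> 0"
      by simp
    moreover have "\<alpha> *\<^sub>R P - \<beta> *\<^sub>R P = (\<alpha> - \<beta>) *\<^sub>R P"
      by (simp add: scaleR_left_diff_distrib)
    ultimately show "\<alpha> *\<^sub>R P - \<beta> *\<^sub>R P \<notin> rank_at_most N"
      using rank_at_most_scaleR_cancel P(2) by metis
  qed
qed

end

theorem mainTheorem11:
  fixes J :: "'h::{real_inner,banach} \<Rightarrow> 'h"
  assumes "complex_structure J"
    and "infinite_dimensional TYPE('h)"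
    and "separable_type TYPE('h)"
  shows "\<not> Polishable (finite_rank_ops J) (subtopology euclidean (finite_rank_ops J))
       \<and> \<not> Polishable (finite_rank_ops J) (subtopology strong_operator_topology (finite_rank_ops J))"
proof -
  have "\<not> Polishable (finite_rank_ops J) (subtopology Y (finite_rank_ops J))"
    if closed: "\<And>n. closedin Y (rank_at_most n)" for Y
  proof (rule not_Polishable_by_countable_cover)
    show "rank_at_most n \<inter> finite_rank_ops J \<in> borel_sets_of (subtopology Y (finite_rank_ops J))" for n
      using closedin_in_borel_sets_of[OF closedin_subtopology_Int_closed[OF closed]]
      by (simp add: Int_commute)
    show "finite_rank_ops J \<subseteq> (\<Union>n. rank_at_most n)"
      by (rule finite_rank_ops_subset_rank_at_most)
    show "x - y \<in> rank_at_most (a + b)" if "x \<in> rank_at_most a" "y \<in> rank_at_most b" for a b x y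
      using that by (rule rank_at_most_diff)
    show "\<exists>f::real \<Rightarrow> _. range f \<subseteq> finite_rank_ops J \<and> (\<forall>\<alpha> \<beta>. \<alpha> \<noteq> \<beta> \<longrightarrow> f \<alpha> - f \<beta> \<notin> rank_at_most N)"
      for N
      by (rule finite_rank_ops_uncountable_family[OF assms(1,2)])
  qed
  then show ?thesis
    using closedin_euclidean_rank_at_most closedin_strong_operator_topology_rank_at_most by blast
qed

end
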